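(* Consider an $\mathsf{oSQMA}$ verifier $\{Q_n\}$ whose circuits consist only of Hadamard, Toffoli and NOT gates. Then there is a polynomial $l$ such that for every yes-instance $x$, the maximum acceptance probability of $Q_{|x|}$ on $x$ (over all witness states) equals $\frac{p}{q}$ for some $p, q \in \mathbb{N}$ with $\log p, \log q \leq l(|x|)$.
   Context: $\Sigma=\{0,1\}$. For a nonempty $S \subseteq [2^p]$, the subset state is $\ket{S} := \frac{1}{\sqrt{|S|}}\sum_{i \in S}\ket{i}$ (computational basis indexed by $[2^p]$). $\mathsf{oSQMA}$: a promise problem $A=(A_{yes},A_{no})$ is in $\mathsf{oSQMA}$ iff there exist polynomials $p,q$ and a polynomial-time uniform family of quantum circuits $\{Q_n\}$ (the verifier), where $Q_n$ takes $x \in \Sigma^*$ with $|x|=n$, a $p(n)$-qubit state, and $q(n)$ ancilla qubits in $\ket{0}^{\otimes q(n)}$, such that: if $x\in A_{yes}$ there is a subset $S \subseteq [2^{p(n)}]$ such that $Q_n$ accepts $(x,\ket{S})$ with probability at least $2/3$ and $\ket{S}$ maximizes the acceptance probability over all $p(n)$-qubit states; if $x \in A_{no}$ then every $p(n)$-qubit state is accepted with probability at most $1/3$. Acceptance means measuring a designated output qubit in the computational basis and obtaining $1$. *)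

theory Defs
  imports Complex_Main "HOL-Computational_Algebra.Polynomial"
begin

text \<open>Gate set: Hadamard, NOT and Toffoli only (the circuits of the verifier consist only of these).
Qubit j of a register corresponds to bit j of the computational-basis index.\<close>

datatype gate = Had nat | Notg nat | Tof nat nat nat

type_synonym qstate = "nat \<Rightarrow> complex"

fun gate_ok :: "nat \<Rightarrow> gate \<Rightarrow> bool" where
  "gate_ok m (Had j) = (j < m)"
| "gate_ok m (Notg j) = (j < m)"
| "gate_ok m (Tof a b c) = (a < m \<and> b < m \<and> c < m \<and> a \<noteq> b \<and> a \<noteq> c \<and> b \<noteq> c)"

fun apply_gate :: "gate \<Rightarrow> qstate \<Rightarrow> qstate" where
  "apply_gate (Had j) \<psi> =
     (\<lambda>i. (\<psi> (unset_bit j i) + (if bit i j then -1 else 1) * \<psi> (set_bit j i))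
           / complex_of_real (sqrt 2))"
| "apply_gate (Notg j) \<psi> = (\<lambda>i. \<psi> (flip_bit j i))"
| "apply_gate (Tof a b c) \<psi> = (\<lambda>i. if bit i a \<and> bit i b then \<psi> (flip_bit c i) else \<psi> i)"

definition run_circuit :: "gate list \<Rightarrow> qstate \<Rightarrow> qstate" where
  "run_circuit C \<psi> = fold apply_gate C \<psi>"

definition unit_state :: "nat \<Rightarrow> qstate \<Rightarrow> bool" where
  "unit_state k \<psi> \<longleftrightarrow> (\<forall>i\<ge>2^k. \<psi> i = 0) \<and> (\<Sum>i<2^k. (cmod (\<psi> i))\<^sup>2) = 1"

definition subset_state :: "nat set \<Rightarrow> qstate" where
  "subset_state S = (\<lambda>i. if i \<in> S then 1 / complex_of_real (sqrt (real (card S))) else 0)"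

fun enc :: "bool list \<Rightarrow> nat" where
  "enc [] = 0"
| "enc (b # bs) = of_bool b + 2 * enc bs"

text \<open>Register layout: qubits 0..n-1 hold x, qubits n..n+k-1 the witness, the rest ancillas in |0>.\<close>
definition initial_state :: "bool list \<Rightarrow> nat \<Rightarrow> qstate \<Rightarrow> qstate" where
  "initial_state x k \<psi> =
     (\<lambda>i. if i mod 2 ^ length x = enc x \<and> i div 2 ^ length x < 2 ^ k
          then \<psi> (i div 2 ^ length x) else 0)"

text \<open>A verifier is given by circuits Q n, output qubit out n, witness length poly pw n
and ancilla count poly qa n.\<close>
definition total_qubits :: "nat poly \<Rightarrow> nat poly \<Rightarrow> nat \<Rightarrow> nat" where
  "total_qubits pw qa n = n + poly pw n + poly qa n"

definition acc :: "(nat \<Rightarrow> gate list) \<Rightarrow> (nat \<Rightarrow> nat) \<Rightarrow> nat poly \<Rightarrow> nat poly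
                   \<Rightarrow> bool list \<Rightarrow> qstate \<Rightarrow> real" where
  "acc Q out pw qa x \<psi> =
     (let n = length x;
          \<phi> = run_circuit (Q n) (initial_state x (poly pw n) \<psi>)
      in \<Sum>i\<in>{i. i < 2 ^ total_qubits pw qa n \<and> bit i (out n)}. (cmod (\<phi> i))\<^sup>2)"

definition max_acc :: "(nat \<Rightarrow> gate list) \<Rightarrow> (nat \<Rightarrow> nat) \<Rightarrow> nat poly \<Rightarrow> nat poly
                       \<Rightarrow> bool list \<Rightarrow> real" where
  "max_acc Q out pw qa x =
     (SUP \<psi> \<in> {\<psi>. unit_state (poly pw (length x)) \<psi>}. acc Q out pw qa x \<psi>)"

definition oSQMA_verifier :: "(nat \<Rightarrow> gate list) \<Rightarrow> (nat \<Rightarrow> nat) \<Rightarrow> nat poly \<Rightarrow> nat poly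
                              \<Rightarrow> bool list set \<Rightarrow> bool list set \<Rightarrow> bool" where
  "oSQMA_verifier Q out pw qa Ayes Ano \<longleftrightarrow>
     (\<forall>n. (\<forall>g\<in>set (Q n). gate_ok (total_qubits pw qa n) g) \<and> out n < total_qubits pw qa n)
   \<and> (\<exists>s::nat poly. \<forall>n. length (Q n) \<le> poly s n)
   \<and> (\<forall>x\<in>Ayes. \<exists>S. S \<subseteq> {..<2 ^ poly pw (length x)} \<and> S \<noteq> {}
          \<and> acc Q out pw qa x (subset_state S) \<ge> 2/3
          \<and> (\<forall>\<psi>. unit_state (poly pw (length x)) \<psi>
                  \<longrightarrow> acc Q out pw qa x \<psi> \<le> acc Q out pw qa x (subset_state S)))
   \<and> (\<forall>x\<in>Ano. \<forall>\<psi>. unit_state (poly pw (length x)) \<psi> \<longrightarrow> acc Q out pw qa x \<psi> \<le> 1/3)"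

end

theory Submission
  imports Defs
begin

text \<open>Every amplitude produced by Hadamard, NOT and Toffoli gates from a subset state on \<open>N\<close>
elements is an integer multiple of \<open>1 / (sqrt N * sqrt 2 ^ h)\<close>, where \<open>h\<close> counts the Hadamards,
and the integers are bounded by \<open>2 ^ h\<close> in absolute value. Since an optimal witness is a
subset state, the maximum acceptance probability is a sum of squares of such integers divided by
\<open>N * 2 ^ h\<close>, a fraction whose numerator and denominator have polynomially many bits.\<close>

definition scaled_int_state :: "real \<Rightarrow> int \<Rightarrow> qstate \<Rightarrow> bool" where
  "scaled_int_state s B \<phi> \<longleftrightarrow>
     (\<exists>c::nat \<Rightarrow> int. (\<forall>i. \<phi> i = complex_of_real (of_int (c i) * s)) \<and> (\<forall>i. \<bar>c i\<bar> \<le> B))"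

lemma scaled_int_state_Had:
  assumes "scaled_int_state s B \<phi>"
  shows "scaled_int_state (s / sqrt 2) (2 * B) (apply_gate (Had j) \<phi>)"
proof -
  obtain c where c: "\<And>i. \<phi> i = complex_of_real (of_int (c i) * s)" and b: "\<And>i. \<bar>c i\<bar> \<le> B"
    using assms unfolding scaled_int_state_def by auto
  define c' where "c' i = c (unset_bit j i) + (if bit i j then -1 else 1) * c (set_bit j i)" for i
  have "apply_gate (Had j) \<phi> i = complex_of_real (of_int (c' i) * (s / sqrt 2))" for i
    by (cases "bit i j") (simp_all add: c c'_def field_simps)
  moreover have "\<bar>c' i\<bar> \<le> 2 * B" for i
  proof -
    have "\<bar>c' i\<bar> \<le> \<bar>c (unset_bit j i)\<bar> + \<bar>c (set_bit j i)\<bar>"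
      unfolding c'_def by (cases "bit i j") (simp_all add: abs_triangle_ineq abs_triangle_ineq4)
    with b[of "unset_bit j i"] b[of "set_bit j i"] show ?thesis by simp
  qed
  ultimately show ?thesis unfolding scaled_int_state_def by blast
qed

lemma scaled_int_state_Notg:
  assumes "scaled_int_state s B \<phi>"
  shows "scaled_int_state s B (apply_gate (Notg j) \<phi>)"
proof -
  obtain c where "\<And>i. \<phi> i = complex_of_real (of_int (c i) * s)" "\<And>i. \<bar>c i\<bar> \<le> B"
    using assms unfolding scaled_int_state_def by auto
  then show ?thesis
    unfolding scaled_int_state_def by (intro exI[of _ "\<lambda>i. c (flip_bit j i)"]) simp
qed

lemma scaled_int_state_Tof:
  assumes "scaled_int_state s B \<phi>"
  shows "scaled_int_state s B (apply_gate (Tof a b d) \<phi>)"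
proof -
  obtain c where "\<And>i. \<phi> i = complex_of_real (of_int (c i) * s)" "\<And>i. \<bar>c i\<bar> \<le> B"
    using assms unfolding scaled_int_state_def by auto
  then show ?thesis
    unfolding scaled_int_state_def
    by (intro exI[of _ "\<lambda>i. if bit i a \<and> bit i b then c (flip_bit d i) else c i"]) simp
qed

lemma scaled_int_state_run_circuit:
  assumes "scaled_int_state s B \<phi>"
  shows "\<exists>h\<le>length C. scaled_int_state (s / sqrt 2 ^ h) (2 ^ h * B) (run_circuit C \<phi>)"
  using assms unfolding run_circuit_def
proof (induction C arbitrary: s B \<phi>)
  case Nil
  then show ?case by auto
next
  case (Cons g C)
  have "\<exists>e\<le>1. scaled_int_state (s / sqrt 2 ^ e) (2 ^ e * B) (apply_gate g \<phi>)"
  proof (cases g)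
    case (Had j)
    then show ?thesis using scaled_int_state_Had[OF Cons.prems] by (intro exI[of _ 1]) simp
  qed (use Cons.prems scaled_int_state_Notg scaled_int_state_Tof in \<open>auto intro: exI[of _ 0]\<close>)
  then obtain e where "e \<le> 1" and "scaled_int_state (s / sqrt 2 ^ e) (2 ^ e * B) (apply_gate g \<phi>)"
    by blast
  from Cons.IH[OF this(2)] obtain h where "h \<le> length C" and
    "scaled_int_state (s / sqrt 2 ^ e / sqrt 2 ^ h) (2 ^ h * (2 ^ e * B)) (fold apply_gate C (apply_gate g \<phi>))"
    by blast
  with \<open>e \<le> 1\<close> show ?case
    by (intro exI[of _ "h + e"]) (simp add: power_add mult_ac)
qed

lemma unit_state_subset_state:
  assumes "S \<subseteq> {..<2 ^ k}" "S \<noteq> {}"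
  shows "unit_state k (subset_state S)"
proof -
  have "card S > 0" using assms finite_subset by (auto simp: card_gt_0_iff)
  have "(\<Sum>i<2^k. (cmod (subset_state S i))\<^sup>2) = (\<Sum>i\<in>S. (cmod (subset_state S i))\<^sup>2)"
    by (rule sum.mono_neutral_right) (use assms(1) in \<open>auto simp: subset_state_def\<close>)
  also have "\<dots> = (\<Sum>i\<in>S. 1 / real (card S))"
    by (rule sum.cong) (auto simp: subset_state_def norm_divide power_divide)
  also have "\<dots> = 1" using \<open>card S > 0\<close> by simp
  finally show ?thesis unfolding unit_state_def using assms(1) by (auto simp: subset_state_def)
qed

lemma scaled_int_state_initial_subset_state:
  "scaled_int_state (1 / sqrt (card S)) 1 (initial_state x k (subset_state S))"
  unfolding scaled_int_state_def initial_state_def subset_state_def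
  by (rule exI[of _ "\<lambda>i. of_bool (i mod 2 ^ length x = enc x \<and> i div 2 ^ length x < 2 ^ k
                                   \<and> i div 2 ^ length x \<in> S)"]) auto

lemma sum_cmod_sq_scaled_int_state:
  assumes "scaled_int_state s B \<phi>" "finite A" "card A \<le> 2 ^ m" "B \<ge> 0"
  shows "\<exists>P::nat. P \<le> 2 ^ m * nat B ^ 2 \<and> (\<Sum>i\<in>A. (cmod (\<phi> i))\<^sup>2) = real P * s\<^sup>2"
proof -
  obtain c where c: "\<And>i. \<phi> i = complex_of_real (of_int (c i) * s)" and b: "\<And>i. \<bar>c i\<bar> \<le> B"
    using assms(1) unfolding scaled_int_state_def by auto
  define P where "P = (\<Sum>i\<in>A. nat \<bar>c i\<bar> ^ 2)"
  have "P \<le> (\<Sum>i\<in>A. nat B ^ 2)"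
    unfolding P_def using b by (intro sum_mono power_mono) (auto intro: nat_mono)
  also have "\<dots> \<le> 2 ^ m * nat B ^ 2" using assms(3) by simp
  finally have "P \<le> 2 ^ m * nat B ^ 2" .
  moreover have "(\<Sum>i\<in>A. (cmod (\<phi> i))\<^sup>2) = real P * s\<^sup>2"
    unfolding P_def c norm_of_real
    by (simp add: sum_distrib_right power_mult_distrib)
  ultimately show ?thesis by blast
qed

lemma log2_le_of_le_power: "p \<le> (2::nat) ^ m \<Longrightarrow> log 2 (real p) \<le> real m"
proof (cases "p = 0")
  case False
  assume "p \<le> 2 ^ m"
  then have "log 2 (real p) \<le> log 2 (2 ^ m)"
    using False by (subst log_le_cancel_iff) (auto simp flip: of_nat_le_iff)
  then show ?thesis by simp
qed (simp add: log_def)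

lemma max_acc_eq_acc_subset_state:
  assumes "S \<subseteq> {..<2 ^ poly pw (length x)}" "S \<noteq> {}"
    and "\<And>\<psi>. unit_state (poly pw (length x)) \<psi>
                 \<Longrightarrow> acc Q out pw qa x \<psi> \<le> acc Q out pw qa x (subset_state S)"
  shows "max_acc Q out pw qa x = acc Q out pw qa x (subset_state S)"
  unfolding max_acc_def
  by (rule cSup_eq_maximum) (use assms unit_state_subset_state in auto)

lemma acc_subset_state_eq_bounded_fraction:
  assumes "S \<subseteq> {..<2 ^ poly pw (length x)}" "S \<noteq> {}"
  shows "\<exists>P q::nat. q > 0 \<and> acc Q out pw qa x (subset_state S) = real P / real q
           \<and> P \<le> 2 ^ (total_qubits pw qa (length x) + 2 * length (Q (length x)))
           \<and> q \<le> 2 ^ (poly pw (length x) + length (Q (length x)))"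
proof -
  define n where "n = length x"
  define N where "N = card S"
  have "N > 0" using assms finite_subset by (auto simp: N_def card_gt_0_iff)
  have "N \<le> 2 ^ poly pw n" using card_mono[OF _ assms(1)] by (simp add: N_def n_def)
  define A where "A = {i::nat. i < 2 ^ total_qubits pw qa n \<and> bit i (out n)}"
  have "card A \<le> 2 ^ total_qubits pw qa n"
    using card_mono[of "{..<2 ^ total_qubits pw qa n}" A] by (auto simp: A_def)
  obtain h where "h \<le> length (Q n)" and h:
    "scaled_int_state (1 / sqrt N / sqrt 2 ^ h) (2 ^ h)
       (run_circuit (Q n) (initial_state x (poly pw n) (subset_state S)))"
    using scaled_int_state_run_circuit[OF scaled_int_state_initial_subset_state]
    unfolding N_def by fastforce
  obtain P :: nat where P: "P \<le> 2 ^ total_qubits pw qa n * nat (2 ^ h) ^ 2"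
    and sum: "(\<Sum>i\<in>A. (cmod (run_circuit (Q n) (initial_state x (poly pw n) (subset_state S)) i))\<^sup>2)
                = real P * (1 / sqrt N / sqrt 2 ^ h)\<^sup>2"
    using sum_cmod_sq_scaled_int_state[OF h _ \<open>card A \<le> _\<close>] by (auto simp: A_def)
  have "(sqrt 2 ^ h)\<^sup>2 = (2::real) ^ h"
    by (simp flip: power_mult_distrib power_mult add: power2_eq_square)
  then have "(1 / sqrt N / sqrt 2 ^ h)\<^sup>2 = 1 / real (N * 2 ^ h)"
    by (simp add: power_divide power_mult_distrib)
  then have "acc Q out pw qa x (subset_state S) = real P / real (N * 2 ^ h)"
    using sum by (simp add: acc_def A_def n_def)
  moreover have "P \<le> 2 ^ (total_qubits pw qa n + 2 * length (Q n))"
  proof -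
    have "P \<le> 2 ^ (total_qubits pw qa n + 2 * h)"
      using P by (simp add: nat_power_eq power_add mult.commute flip: power_mult)
    also have "\<dots> \<le> 2 ^ (total_qubits pw qa n + 2 * length (Q n))"
      using \<open>h \<le> length (Q n)\<close> by (intro power_increasing) auto
    finally show ?thesis .
  qed
  moreover have "N * 2 ^ h \<le> 2 ^ (poly pw n + length (Q n))"
  proof -
    have "N * 2 ^ h \<le> 2 ^ poly pw n * 2 ^ length (Q n)"
      using \<open>N \<le> _\<close> \<open>h \<le> _\<close> by (intro mult_mono power_increasing) auto
    then show ?thesis by (simp add: power_add)
  qed
  ultimately show ?thesis using \<open>N > 0\<close> unfolding n_def by (intro exI[of _ P] exI[of _ "N * 2 ^ h"]) simp
qed

theorem mainTheorem10:
  fixes Q :: "nat \<Rightarrow> gate list" and out :: "nat \<Rightarrow> nat" and pw qa :: "nat poly"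
    and Ayes Ano :: "bool list set"
  assumes "oSQMA_verifier Q out pw qa Ayes Ano"
  shows "\<exists>l::nat poly. \<forall>x\<in>Ayes. \<exists>p q :: nat. q > 0
           \<and> max_acc Q out pw qa x = real p / real q
           \<and> log 2 (real p) \<le> real (poly l (length x))
           \<and> log 2 (real q) \<le> real (poly l (length x))"
proof -
  obtain s :: "nat poly" where s: "\<And>n. length (Q n) \<le> poly s n"
    using assms unfolding oSQMA_verifier_def by blast
  define l where "l = [:0, 1:] + pw + qa + smult 2 s"
  have l: "poly l n = total_qubits pw qa n + 2 * poly s n" for n
    by (simp add: l_def total_qubits_def)
  show ?thesis
  proof (intro exI[of _ l] ballI)
    fix x assume "x \<in> Ayes"
    then obtain S where S: "S \<subseteq> {..<2 ^ poly pw (length x)}" "S \<noteq> {}" and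
      "\<And>\<psi>. unit_state (poly pw (length x)) \<psi> \<Longrightarrow> acc Q out pw qa x \<psi> \<le> acc Q out pw qa x (subset_state S)"
      using assms unfolding oSQMA_verifier_def by blast
    then have "max_acc Q out pw qa x = acc Q out pw qa x (subset_state S)"
      by (rule max_acc_eq_acc_subset_state)
    moreover obtain p q where "q > 0" "acc Q out pw qa x (subset_state S) = real p / real q"
      and p: "p \<le> 2 ^ (total_qubits pw qa (length x) + 2 * length (Q (length x)))"
      and q: "q \<le> 2 ^ (poly pw (length x) + length (Q (length x)))"
      using acc_subset_state_eq_bounded_fraction[OF S] by blast
    moreover have "log 2 (real p) \<le> real (poly l (length x))"
      using log2_le_of_le_power[OF p] s[of "length x"] by (simp add: l)
    moreover have "log 2 (real q) \<le> real (poly l (length x))"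
      using log2_le_of_le_power[OF q] s[of "length x"] by (simp add: l total_qubits_def)
    ultimately show "\<exists>p q :: nat. q > 0 \<and> max_acc Q out pw qa x = real p / real q
        \<and> log 2 (real p) \<le> real (poly l (length x)) \<and> log 2 (real q) \<le> real (poly l (length x))"
      by auto
  qed
qed

end
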